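(* Let $H_1,\dots,H_n$ be null hypotheses indexed by $\mathcal V=\{1,\dots,n\}$ with $p$-values $p_1,\dots,p_n$ that are marginally uniform on $[0,1]$ under the null; let $\bar{\mathcal S}=\{v:H_v\text{ true}\}$. Let $\mathcal G$ be a directed acyclic graph on $\mathcal V$ such that if $H_v$ is false then $H_w$ is false for every ancestor $w$ of $v$, and let $\mathcal C_v$ be $v$ together with its descendants. Let $Z_v=\Phi^{-1}(p_v)$, where $\Phi$ is the standard normal CDF, and assume $Z_{\bar{\mathcal S}}\sim\mathcal N(0,R)$ for some correlation matrix $R$. For weights $\pi_{vw}\ge0$ with $\sum_{w\in\mathcal C_v}\pi_{vw}=1$, define \[\tilde p_v=\begin{cases}1 & \text{if }\sum_{w\in\mathcal C_v}\pi_{vw}Z_w\ge0,\\ \Phi\big(\sum_{w\in\mathcal C_v}\pi_{vw}Z_w\big)&\text{otherwise.}\end{cases}\] Then $\Pr(\tilde p_v\le\alpha)\le\alpha$ for all $\alpha\in[0,1]$ and all $v\in\bar{\mathcal S}$. *)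

theory Defs
  imports "HOL-Probability.Probability"
begin

text \<open>Standard normal CDF and its inverse (on (0,1); values outside are irrelevant).\<close>
definition Phi :: "real \<Rightarrow> real" where
  "Phi x = (LINT t:{..x}|lborel. std_normal_density t)"

definition Phi_inv :: "real \<Rightarrow> real" where
  "Phi_inv q = (THE z. Phi z = q)"

definition desc_closed :: "(nat \<times> nat) set \<Rightarrow> nat \<Rightarrow> nat set" where
  "desc_closed E v = {v} \<union> {w. (v, w) \<in> E\<^sup>+}"

text \<open>Z restricted to the index set S is a centred Gaussian vector with covariance R:
  every linear combination is N(0, c^T R c) (degenerate at 0 when the variance is 0).\<close>
definition centered_gaussian_vector ::
  "'a measure \<Rightarrow> (nat \<Rightarrow> 'a \<Rightarrow> real) \<Rightarrow> nat set \<Rightarrow> (nat \<Rightarrow> nat \<Rightarrow> real) \<Rightarrow> bool" where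
  "centered_gaussian_vector M Z S R \<longleftrightarrow>
     (\<forall>c :: nat \<Rightarrow> real.
        let Y = (\<lambda>x. \<Sum>w\<in>S. c w * Z w x);
            s = (\<Sum>v\<in>S. \<Sum>w\<in>S. c v * c w * R v w)
        in (s > 0 \<longrightarrow> distributed M lborel Y (normal_density 0 (sqrt s)))
         \<and> (s = 0 \<longrightarrow> Y \<in> borel_measurable M \<and> (AE x in M. Y x = 0)))"

definition correlation_matrix :: "nat set \<Rightarrow> (nat \<Rightarrow> nat \<Rightarrow> real) \<Rightarrow> bool" where
  "correlation_matrix S R \<longleftrightarrow>
     (\<forall>v\<in>S. R v v = 1) \<and> (\<forall>v\<in>S. \<forall>w\<in>S. R v w = R w v) \<and>
     (\<forall>c :: nat \<Rightarrow> real. (\<Sum>v\<in>S. \<Sum>w\<in>S. c v * c w * R v w) \<ge> 0)"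

definition ptilde ::
  "(nat \<times> nat) set \<Rightarrow> (nat \<Rightarrow> nat \<Rightarrow> real) \<Rightarrow> (nat \<Rightarrow> 'a \<Rightarrow> real) \<Rightarrow> nat \<Rightarrow> 'a \<Rightarrow> real" where
  "ptilde E \<pi> Z v x =
     (let s = (\<Sum>w\<in>desc_closed E v. \<pi> v w * Z w x) in if s \<ge> 0 then 1 else Phi s)"

end

theory Submission
  imports Defs
begin

(* Since hypotheses are closed under ancestors, all of C_v consists of true nulls, so
   S = sum_w pi_vw Z_w is a centred Gaussian of variance pi^T R pi <= (sum_w pi_vw)^2 = 1,
   correlations being at most 1. If the variance sigma^2 is positive, then on {S < 0} the
   standard normal S / sigma lies below S, so {Phi S <= alpha} is contained in
   {Phi (S / sigma) <= alpha}, which has probability at most alpha because Phi is the continuous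
   distribution function of S / sigma. If the variance is 0, then S = 0 almost surely and the
   p-value is 1. *)

lemma std_normal_density_le_1: "std_normal_density t \<le> 1"
proof -
  have "exp (- t\<^sup>2 / 2) \<le> 1" by simp
  also have "1 \<le> sqrt (2 * pi)" using pi_gt3 by simp
  finally show ?thesis
    unfolding std_normal_density_def by (simp add: field_simps)
qed

lemma set_integrable_std_normal_density:
  "A \<in> sets borel \<Longrightarrow> set_integrable lborel A std_normal_density"
  unfolding set_integrable_def
  by (rule integrable_mult_indicator[OF _ integrable_normal_density]) auto

lemma Phi_diff:
  assumes "x \<le> y"
  shows "Phi y - Phi x = (LINT t:{x<..y}|lborel. std_normal_density t)"
proof -
  have "{..y} = {..x} \<union> {x<..y}" using assms by auto
  then show ?thesis unfolding Phi_def
    by (simp, subst set_integral_Un) (auto intro: set_integrable_std_normal_density)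
qed

lemma mono_Phi: "mono Phi"
proof
  fix x y :: real assume "x \<le> y"
  have "0 \<le> (LINT t:{x<..y}|lborel. std_normal_density t)"
    unfolding set_lebesgue_integral_def by (simp add: Bochner_Integration.integral_nonneg)
  with Phi_diff[OF \<open>x \<le> y\<close>] show "Phi x \<le> Phi y" by simp
qed

lemma Phi_diff_le: "x \<le> y \<Longrightarrow> Phi y - Phi x \<le> y - x"
proof -
  assume "x \<le> y"
  have "(LINT t:{x<..y}|lborel. std_normal_density t) \<le> (LINT t:{x<..y}|lborel. 1)"
  proof (rule set_integral_mono)
    show "set_integrable lborel {x<..y} (\<lambda>t. 1::real)"
      using \<open>x \<le> y\<close> by (simp add: set_integrable_def)
  qed (auto intro: set_integrable_std_normal_density std_normal_density_le_1)
  also have "\<dots> = y - x" using \<open>x \<le> y\<close> by (simp add: set_lebesgue_integral_def)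
  finally show ?thesis using Phi_diff[OF \<open>x \<le> y\<close>] by simp
qed

lemma lipschitz_on_Phi: "1-lipschitz_on UNIV Phi"
proof (rule lipschitz_onI)
  fix x y :: real
  show "dist (Phi x) (Phi y) \<le> 1 * dist x y"
    using Phi_diff_le[of x y] Phi_diff_le[of y x] monoD[OF mono_Phi, of x y] monoD[OF mono_Phi, of y x]
    by (cases "x \<le> y") (auto simp: dist_real_def)
qed simp

lemma continuous_on_Phi: "continuous_on A Phi"
  using lipschitz_on_continuous_on[OF lipschitz_on_subset[OF lipschitz_on_Phi]] by blast

lemma (in prob_space) measure_std_normal_le:
  assumes "distributed M lborel Y std_normal_density"
  shows "measure M {x\<in>space M. Y x \<le> t} = Phi t"
proof -
  have "Phi t = (\<integral>y. std_normal_density y * indicator {..t} y \<partial>lborel)"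
    unfolding Phi_def set_lebesgue_integral_def by (simp add: mult.commute)
  also have "\<dots> = (\<integral>x. indicator {..t} (Y x) \<partial>M)"
    by (rule distributed_integral[OF assms]) auto
  also have "\<dots> = (\<integral>x. indicator (Y -` {..t} \<inter> space M) x \<partial>M)"
    by (rule Bochner_Integration.integral_cong) (auto simp: indicator_def)
  also have "\<dots> = measure M {x\<in>space M. Y x \<le> t}"
    by (simp add: Int_assoc vimage_def Collect_conj_eq Int_commute)
  finally show ?thesis ..
qed

text \<open>The bound b makes the set of levels y with F y \<le> \<alpha> bounded above; being closed, it
  contains its supremum z, and the event lies inside {Y \<le> z}.\<close>
lemma (in prob_space) measure_cdf_le:
  fixes Y :: "'a \<Rightarrow> real"
  assumes Y: "Y \<in> borel_measurable M"
    and cdf: "\<And>t. measure M {x\<in>space M. Y x \<le> t} = F t"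
    and F: "continuous_on UNIV F" and "0 \<le> \<alpha>"
  shows "measure M {x\<in>space M. Y x \<le> b \<and> F (Y x) \<le> \<alpha>} \<le> \<alpha>"
proof (cases "{y. y \<le> b \<and> F y \<le> \<alpha>} = {}")
  case True
  then have "{x\<in>space M. Y x \<le> b \<and> F (Y x) \<le> \<alpha>} = {}" by blast
  then show ?thesis using \<open>0 \<le> \<alpha>\<close> by (metis measure_empty)
next
  case False
  define B where "B = {y. y \<le> b \<and> F y \<le> \<alpha>}"
  have "closed B"
    unfolding B_def Collect_conj_eq
    by (intro closed_Int closed_Collect_le[OF continuous_on_id continuous_on_const]
        closed_Collect_le[OF F continuous_on_const])
  moreover have "bdd_above B" unfolding B_def by (rule bdd_aboveI[of _ b]) auto
  moreover have "B \<noteq> {}" using False unfolding B_def .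
  ultimately have "Sup B \<in> B" by (intro closed_contains_Sup)
  have "{x\<in>space M. Y x \<le> b \<and> F (Y x) \<le> \<alpha>} \<subseteq> {x\<in>space M. Y x \<le> Sup B}"
    using cSup_upper[OF _ \<open>bdd_above B\<close>] unfolding B_def by auto
  then have "measure M {x\<in>space M. Y x \<le> b \<and> F (Y x) \<le> \<alpha>} \<le> measure M {x\<in>space M. Y x \<le> Sup B}"
    by (rule finite_measure_mono) (use Y in measurable)
  also have "\<dots> = F (Sup B)" by (rule cdf)
  finally show ?thesis using \<open>Sup B \<in> B\<close> unfolding B_def by simp
qed

lemma borel_measurable_Phi [measurable]: "Phi \<in> borel_measurable borel"
  by (rule borel_measurable_continuous_onI[OF continuous_on_Phi])

lemma (in prob_space) measure_Phi_normal_neg_le: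
  assumes S: "distributed M lborel S (normal_density 0 \<sigma>)"
    and "0 < \<sigma>" "\<sigma> \<le> 1" "0 \<le> \<alpha>"
  shows "measure M {x\<in>space M. S x < 0 \<and> Phi (S x) \<le> \<alpha>} \<le> \<alpha>"
proof -
  define Y where "Y = (\<lambda>x. S x / \<sigma>)"
  have Y: "distributed M lborel Y std_normal_density"
    using normal_standard_normal_convert[OF \<open>0 < \<sigma>\<close>, of S 0] S by (simp add: Y_def)
  have [measurable]: "Y \<in> borel_measurable M"
    using distributed_measurable[OF Y] by simp
  have "S x < 0 \<Longrightarrow> Y x \<le> S x" for x
    using \<open>0 < \<sigma>\<close> \<open>\<sigma> \<le> 1\<close> unfolding Y_def
    by (simp add: divide_le_eq mult_le_cancel_left1)
  then have "{x\<in>space M. S x < 0 \<and> Phi (S x) \<le> \<alpha>} \<subseteq> {x\<in>space M. Y x \<le> 0 \<and> Phi (Y x) \<le> \<alpha>}"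
    using monoD[OF mono_Phi] by fastforce
  then have "measure M {x\<in>space M. S x < 0 \<and> Phi (S x) \<le> \<alpha>}
      \<le> measure M {x\<in>space M. Y x \<le> 0 \<and> Phi (Y x) \<le> \<alpha>}"
    by (rule finite_measure_mono) measurable
  also have "\<dots> \<le> \<alpha>"
    using measure_std_normal_le[OF Y] continuous_on_Phi \<open>0 \<le> \<alpha>\<close>
    by (intro measure_cdf_le) auto
  finally show ?thesis .
qed

lemma (in prob_space) measure_truncated_Phi_le:
  assumes "0 \<le> s" "s \<le> 1"
    and normal: "s > 0 \<Longrightarrow> distributed M lborel Y (normal_density 0 (sqrt s))"
    and degenerate: "s = 0 \<Longrightarrow> AE x in M. Y x = 0"
    and \<alpha>: "\<alpha> \<in> {0..1}"
  shows "measure M {x\<in>space M. (if Y x \<ge> 0 then 1 else Phi (Y x)) \<le> \<alpha>} \<le> \<alpha>"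
proof (cases "\<alpha> = 1")
  case True
  then show ?thesis by simp
next
  case False
  then have "{x\<in>space M. (if Y x \<ge> 0 then 1 else Phi (Y x)) \<le> \<alpha>}
      = {x\<in>space M. Y x < 0 \<and> Phi (Y x) \<le> \<alpha>}"
    using \<alpha> by auto
  moreover have "measure M {x\<in>space M. Y x < 0 \<and> Phi (Y x) \<le> \<alpha>} \<le> \<alpha>"
  proof (cases "s = 0")
    case True
    then have "AE x in M. \<not> (Y x < 0 \<and> Phi (Y x) \<le> \<alpha>)"
      using degenerate by (auto elim: AE_mp)
    then show ?thesis using \<alpha> by (simp add: measure_def emeasure_eq_0_AE)
  next
    case False
    then show ?thesis
      using \<open>0 \<le> s\<close> \<open>s \<le> 1\<close> \<alpha> normal
      by (intro measure_Phi_normal_neg_le[of Y "sqrt s"]) auto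
  qed
  ultimately show ?thesis by simp
qed

lemma correlation_matrix_le_1:
  assumes "correlation_matrix S R" "finite S" "a \<in> S" "b \<in> S"
  shows "R a b \<le> 1"
proof -
  define d :: "nat \<Rightarrow> real" where "d u = of_bool (u = a) - of_bool (u = b)" for u
  have d_sum: "(\<Sum>w\<in>S. d w * f w) = f a - f b" for f :: "nat \<Rightarrow> real"
    using assms(2-4) by (simp add: d_def left_diff_distrib sum_subtractf)
  have "0 \<le> (\<Sum>v\<in>S. \<Sum>w\<in>S. d v * d w * R v w)"
    using assms(1) unfolding correlation_matrix_def by blast
  also have "\<dots> = (\<Sum>v\<in>S. d v * (\<Sum>w\<in>S. d w * R v w))"
    by (simp add: sum_distrib_left mult.assoc)
  also have "\<dots> = R a a - R a b - (R b a - R b b)"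
    by (simp add: d_sum)
  finally show ?thesis using assms unfolding correlation_matrix_def by simp
qed

lemma correlation_quadratic_form_le:
  assumes "correlation_matrix S R" "finite S" "\<And>v. v \<in> S \<Longrightarrow> 0 \<le> c v"
  shows "(\<Sum>v\<in>S. \<Sum>w\<in>S. c v * c w * R v w) \<le> (\<Sum>v\<in>S. c v)\<^sup>2"
proof -
  have "(\<Sum>v\<in>S. \<Sum>w\<in>S. c v * c w * R v w) \<le> (\<Sum>v\<in>S. \<Sum>w\<in>S. c v * c w)"
    using correlation_matrix_le_1[OF assms(1,2)] assms(3)
    by (intro sum_mono mult_left_le) auto
  also have "\<dots> = (\<Sum>v\<in>S. c v)\<^sup>2"
    by (simp add: power2_eq_square sum_product)
  finally show ?thesis .
qed

lemma desc_closed_subset: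
  assumes "E \<subseteq> V \<times> V" "v \<in> S"
    and "\<And>u w. u \<in> V \<Longrightarrow> u \<notin> S \<Longrightarrow> (w, u) \<in> E\<^sup>+ \<Longrightarrow> w \<notin> S"
  shows "desc_closed E v \<subseteq> S"
proof
  fix w assume "w \<in> desc_closed E v"
  then consider "w = v" | "(v, w) \<in> E\<^sup>+" unfolding desc_closed_def by auto
  then show "w \<in> S"
  proof cases
    case 2
    then have "w \<in> V" using assms(1) by (cases rule: tranclE) auto
    with 2 show ?thesis using assms(2,3) by blast
  qed (use assms(2) in simp)
qed

theorem lemma2:
  fixes M :: "'a measure" and n :: nat
    and p :: "nat \<Rightarrow> 'a \<Rightarrow> real"
    and Snull :: "nat set"
    and E :: "(nat \<times> nat) set"
    and R :: "nat \<Rightarrow> nat \<Rightarrow> real"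
    and \<pi> :: "nat \<Rightarrow> nat \<Rightarrow> real"
  assumes M: "prob_space M"
    and p_meas: "\<And>v. v \<in> {1..n} \<Longrightarrow> p v \<in> borel_measurable M"
    and p_unif: "\<And>v. v \<in> Snull \<Longrightarrow> distributed M lborel (p v) (\<lambda>t. ennreal (indicator {0..1} t))"
    and Snull_sub: "Snull \<subseteq> {1..n}"
    and E_sub: "E \<subseteq> {1..n} \<times> {1..n}"
    and dag: "acyclic E"
    and anc: "\<And>v w. v \<in> {1..n} \<Longrightarrow> v \<notin> Snull \<Longrightarrow> (w, v) \<in> E\<^sup>+ \<Longrightarrow> w \<notin> Snull"
    and R: "correlation_matrix Snull R"
    and gauss: "centered_gaussian_vector M (\<lambda>v x. Phi_inv (p v x)) Snull R"
    and \<pi>_nonneg: "\<And>v w. v \<in> {1..n} \<Longrightarrow> w \<in> desc_closed E v \<Longrightarrow> \<pi> v w \<ge> 0"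
    and \<pi>_sum: "\<And>v. v \<in> {1..n} \<Longrightarrow> (\<Sum>w\<in>desc_closed E v. \<pi> v w) = 1"
  shows "\<forall>\<alpha>\<in>{0..1}. \<forall>v\<in>Snull.
           measure M {x \<in> space M. ptilde E \<pi> (\<lambda>w x. Phi_inv (p w x)) v x \<le> \<alpha>} \<le> \<alpha>"
proof (intro ballI)
  fix \<alpha> :: real and v assume \<alpha>: "\<alpha> \<in> {0..1}" and v: "v \<in> Snull"
  interpret prob_space M by (rule M)
  define C where "C = desc_closed E v"
  define c where "c w = (if w \<in> C then \<pi> v w else 0)" for w
  define Y where "Y x = (\<Sum>w\<in>Snull. c w * Phi_inv (p w x))" for x
  define s where "s = (\<Sum>a\<in>Snull. \<Sum>b\<in>Snull. c a * c b * R a b)"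
  have "finite Snull" using Snull_sub finite_subset by blast
  have "v \<in> {1..n}" using v Snull_sub by auto
  have "C \<subseteq> Snull" unfolding C_def using E_sub v anc by (rule desc_closed_subset)
  then have restrict: "(\<Sum>w\<in>Snull. c w * f w) = (\<Sum>w\<in>C. \<pi> v w * f w)" for f
    using \<open>finite Snull\<close> by (intro sum.mono_neutral_cong_right) (auto simp: c_def)
  have "0 \<le> s" using R unfolding s_def correlation_matrix_def by blast
  have "s \<le> (\<Sum>w\<in>Snull. c w)\<^sup>2"
    unfolding s_def using \<pi>_nonneg[OF \<open>v \<in> {1..n}\<close>]
    by (intro correlation_quadratic_form_le[OF R \<open>finite Snull\<close>]) (simp add: c_def C_def)
  also have "(\<Sum>w\<in>Snull. c w) = 1"
    using restrict[of "\<lambda>_. 1"] \<pi>_sum[OF \<open>v \<in> {1..n}\<close>] by (simp add: C_def)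
  finally have "s \<le> 1" by simp
  have ptilde_eq: "ptilde E \<pi> (\<lambda>w x. Phi_inv (p w x)) v x = (if Y x \<ge> 0 then 1 else Phi (Y x))" for x
    unfolding ptilde_def Y_def restrict C_def by simp
  show "measure M {x \<in> space M. ptilde E \<pi> (\<lambda>w x. Phi_inv (p w x)) v x \<le> \<alpha>} \<le> \<alpha>"
    unfolding ptilde_eq
  proof (rule measure_truncated_Phi_le[OF \<open>0 \<le> s\<close> \<open>s \<le> 1\<close> _ _ \<alpha>])
    show "0 < s \<Longrightarrow> distributed M lborel Y (normal_density 0 (sqrt s))"
      and "s = 0 \<Longrightarrow> AE x in M. Y x = 0"
      using gauss unfolding centered_gaussian_vector_def Let_def Y_def s_def
      by (metis (no_types, lifting))+
  qed
qed

end
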